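(* Let $A,M\in\mathbb{C}^{n\times n}$ be Hermitian with $M$ positive definite, and let the eigenvalues of the pair $(A,M)$ be $\lambda_1<\lambda_2\le\cdots\le\lambda_n$, with $\mathcal{X}_1$ the eigenspace associated with $\lambda_1$. Put $A_{\lambda_1}=A-\lambda_1 M$. Let $T\in\mathbb{C}^{n\times n}$ be Hermitian positive definite. Let $x^{(0)}\in\mathbb{C}^n$ be neither an eigenvector of $(A,M)$ associated with $\lambda_1$ nor $M$-orthogonal to $\mathcal{X}_1$, and let $x^{(0)},x^{(1)},\ldots$ be the iterates of the following heuristic preconditioned CG iteration (for as long as it is defined): set $r^{(0)}=-A_{\lambda_1}x^{(0)}$, $\gamma^{(0)}=(Tr^{(0)})^*r^{(0)}$, $p^{(0)}=Tr^{(0)}$, and for $i=0,1,\ldots$: $w=A_{\lambda_1}p^{(i)}$, $\delta=\gamma^{(i)}/(w^*p^{(i)})$, $x^{(i+1)}=x^{(i)}+\delta p^{(i)}$, $r^{(i+1)}=r^{(i)}-\delta w$, $\gamma^{(i+1)}=(Tr^{(i+1)})^*r^{(i+1)}$, $p^{(i+1)}=Tr^{(i+1)}+(\gamma^{(i+1)}/\gamma^{(i)})p^{(i)}$. Then for every $i$, $x^{(i)}-x^{(0)}$ is $T^{-1}$-orthogonal to $\mathcal{X}_1$ (i.e. $y^*T^{-1}(x^{(i)}-x^{(0)})=0$ for all $y\in\mathcal{X}_1$), and $$\|x^{(i)}\|_M^2\ge\mu_1\|x^{(0)}\|_{T^{-1}}^2\big(\cos\angle_{T^{-1}}(x^{(0)},\mathcal{X}_1)\big)^2,$$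 where $\mu_1$ is the smallest eigenvalue of the matrix pair $(M,T^{-1})$.
   Context: $\|y\|_M=(y^*My)^{1/2}$, $\|y\|_{T^{-1}}=(y^*T^{-1}y)^{1/2}$. $\angle_{T^{-1}}(x,\mathcal{X}_1)$ is the angle between the vector $x$ and the subspace $\mathcal{X}_1$ with respect to the inner product $(u,v)\mapsto u^*T^{-1}v$, i.e. $\cos\angle_{T^{-1}}(x,\mathcal{X}_1)=\max_{y\in\mathcal{X}_1\setminus\{0\}}|y^*T^{-1}x|/(\|y\|_{T^{-1}}\|x\|_{T^{-1}})$. *)

theory Defs
  imports "HOL-Analysis.Analysis"
begin

definition cinner :: "complex^'n \<Rightarrow> complex^'n \<Rightarrow> complex" where
  "cinner y z = (\<Sum>i\<in>UNIV. cnj (y$i) * z$i)"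

definition hermitian_mat :: "complex^'n^'n \<Rightarrow> bool" where
  "hermitian_mat A \<longleftrightarrow> (\<forall>i j. A$i$j = cnj (A$j$i))"

definition posdef_mat :: "complex^'n^'n \<Rightarrow> bool" where
  "posdef_mat A \<longleftrightarrow> hermitian_mat A \<and> (\<forall>x. x \<noteq> 0 \<longrightarrow> Re (cinner x (A *v x)) > 0)"

definition pair_eigval :: "complex^'n^'n \<Rightarrow> complex^'n^'n \<Rightarrow> complex \<Rightarrow> bool" where
  "pair_eigval A B mu \<longleftrightarrow> (\<exists>v. v \<noteq> 0 \<and> A *v v = mu *s (B *v v))"

definition pair_eigspace :: "complex^'n^'n \<Rightarrow> complex^'n^'n \<Rightarrow> complex \<Rightarrow> (complex^'n) set" where
  "pair_eigspace A B mu = {v. A *v v = mu *s (B *v v)}"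

text \<open>Squared B-norm: y^* B y (real for Hermitian B).\<close>
definition sqnorm_mat :: "complex^'n^'n \<Rightarrow> complex^'n \<Rightarrow> real" where
  "sqnorm_mat B y = Re (cinner y (B *v y))"

definition norm_mat :: "complex^'n^'n \<Rightarrow> complex^'n \<Rightarrow> real" where
  "norm_mat B y = sqrt (sqnorm_mat B y)"

definition cos_angle :: "complex^'n^'n \<Rightarrow> complex^'n \<Rightarrow> (complex^'n) set \<Rightarrow> real" where
  "cos_angle B x X = Sup {cmod (cinner y (B *v x)) / (norm_mat B y * norm_mat B x) | y. y \<in> X \<and> y \<noteq> 0}"

definition shift_mat :: "complex^'n^'n \<Rightarrow> complex^'n^'n \<Rightarrow> complex \<Rightarrow> complex^'n^'n" where
  "shift_mat A M lam = (\<chi> i j. A$i$j - lam * M$i$j)"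

type_synonym 'n pcg_state = "(complex^'n) \<times> (complex^'n) \<times> complex \<times> (complex^'n)"

definition pcg_step :: "complex^'n^'n \<Rightarrow> complex^'n^'n \<Rightarrow>
    'n pcg_state \<Rightarrow>
    'n pcg_state" where
  "pcg_step Al T st =
     (let x = fst st; r = fst (snd st); g = fst (snd (snd st)); p = snd (snd (snd st));
         w = Al *v p; d = g / cinner w p; x' = x + (d *s p); r' = r - (d *s w);
         g' = cinner (T *v r') r'; p' = (T *v r') + ((g' / g) *s p)
     in (x', r', g', p'))"

definition pcg_init :: "complex^'n^'n \<Rightarrow> complex^'n^'n \<Rightarrow> complex^'n \<Rightarrow>
    'n pcg_state" where
  "pcg_init Al T x0 = (let r = - (Al *v x0) in (x0, r, cinner (T *v r) r, T *v r))"

primrec pcg :: "complex^'n^'n \<Rightarrow> complex^'n^'n \<Rightarrow> complex^'n \<Rightarrow> nat \<Rightarrow>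
    'n pcg_state" where
  "pcg Al T x0 0 = pcg_init Al T x0"
| "pcg Al T x0 (Suc i) = pcg_step Al T (pcg Al T x0 i)"

definition pcg_x where "pcg_x Al T x0 i = fst (pcg Al T x0 i)"
definition pcg_r where "pcg_r Al T x0 i = fst (snd (pcg Al T x0 i))"
definition pcg_gamma where "pcg_gamma Al T x0 i = fst (snd (snd (pcg Al T x0 i)))"
definition pcg_p where "pcg_p Al T x0 i = snd (snd (snd (pcg Al T x0 i)))"

text \<open>x^(k) is defined (no division by zero occurred): for all j < k, the denominator
  w^* p^(j) is nonzero, and gamma^(j) \<noteq> 0 whenever p^(j+1) is used (j+1 < k).\<close>
definition pcg_defined :: "complex^'n^'n \<Rightarrow> complex^'n^'n \<Rightarrow> complex^'n \<Rightarrow> nat \<Rightarrow> bool" where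
  "pcg_defined Al T x0 k \<longleftrightarrow> (\<forall>j<k. cinner (Al *v pcg_p Al T x0 j) (pcg_p Al T x0 j) \<noteq> 0
      \<and> (Suc j < k \<longrightarrow> pcg_gamma Al T x0 j \<noteq> 0))"

end

theory Submission
  imports Defs
begin

text \<open>The residual \<open>r = -A\<^sub>\<lambda> x\<close> stays in the range of the Hermitian matrix \<open>A\<^sub>\<lambda>\<close>,
  hence orthogonal to its kernel \<open>X\<^sub>1\<close>. Since \<open>T\<^sup>-\<^sup>1 p\<^sub>k\<close> is a combination of residuals,
  every search direction, and hence every increment \<open>x\<^sub>i - x\<^sub>0\<close>, is
  \<open>T\<^sup>-\<^sup>1\<close>-orthogonal to \<open>X\<^sub>1\<close>. So \<open>x\<^sub>i\<close> and \<open>x\<^sub>0\<close> have the same \<open>T\<^sup>-\<^sup>1\<close>-inner products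
  with \<open>X\<^sub>1\<close>, and Cauchy-Schwarz for the \<open>T\<^sup>-\<^sup>1\<close>-inner product bounds
  \<open>cos \<angle>(x\<^sub>0, X\<^sub>1) \<cdot> \<parallel>x\<^sub>0\<parallel>\<close> by \<open>\<parallel>x\<^sub>i\<parallel>\<close>. Finally \<open>\<parallel>z\<parallel>\<^sub>M\<^sup>2 \<ge> \<mu>\<^sub>1 \<parallel>z\<parallel>\<^sup>2\<close> in the
  \<open>T\<^sup>-\<^sup>1\<close>-norm, because the Rayleigh quotient of \<open>(M, T\<^sup>-\<^sup>1)\<close> attains its minimum at an
  eigenvector.

  The bound even holds past a breakdown of the iteration: there \<open>x / 0 = 0\<close>
  makes the steps degenerate without breaking the invariant.\<close>

lemma cinner_add_left: "cinner (a + b) y = cinner a y + cinner b y"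
  by (simp add: cinner_def distrib_right sum.distrib)

lemma cinner_add_right: "cinner y (a + b) = cinner y a + cinner y b"
  by (simp add: cinner_def distrib_left sum.distrib)

lemma cinner_diff_right: "cinner y (a - b) = cinner y a - cinner y b"
  by (simp add: cinner_def right_diff_distrib sum_subtractf)

lemma cinner_minus_right: "cinner y (- a) = - cinner y a"
  by (simp add: cinner_def sum_negf)

lemma cinner_scale_left: "cinner (c *s a) y = cnj c * cinner a y"
  by (simp add: cinner_def sum_distrib_left mult_ac)

lemma cinner_scale_right: "cinner y (c *s a) = c * cinner y a"
  by (simp add: cinner_def sum_distrib_left mult_ac)

lemma cinner_zero_left [simp]: "cinner 0 y = 0"
  by (simp add: cinner_def)

lemma cinner_zero_right [simp]: "cinner y 0 = 0"
  by (simp add: cinner_def)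

lemma cinner_commute: "cinner y z = cnj (cinner z y)"
  by (simp add: cinner_def mult_ac)

lemma cinner_self: "cinner x x = of_real (\<Sum>i\<in>UNIV. (cmod (x$i))^2)"
  unfolding cinner_def of_real_sum
proof (rule sum.cong)
  fix i
  show "cnj (x$i) * x$i = of_real ((cmod (x$i))^2)"
    using complex_norm_square[of "x$i"] by (simp add: mult.commute)
qed simp

lemma Re_cinner_self_eq_0_iff: "Re (cinner x x) = 0 \<longleftrightarrow> x = 0"
  by (simp add: cinner_self sum_nonneg_eq_0_iff vec_eq_iff)

lemma hermitian_mat_adjoint:
  assumes "hermitian_mat C"
  shows "cinner y (C *v z) = cinner (C *v y) z"
proof -
  have "cinner y (C *v z) = (\<Sum>i\<in>UNIV. \<Sum>j\<in>UNIV. cnj (y$i) * C$i$j * z$j)"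
    by (simp add: cinner_def matrix_vector_mult_def sum_distrib_left mult_ac)
  also have "\<dots> = (\<Sum>j\<in>UNIV. \<Sum>i\<in>UNIV. cnj (y$i) * C$i$j * z$j)"
    by (rule sum.swap)
  also have "\<dots> = (\<Sum>j\<in>UNIV. \<Sum>i\<in>UNIV. cnj (C$j$i * y$i) * z$j)"
    using assms unfolding hermitian_mat_def
    by (intro sum.cong refl) (metis complex_cnj_cnj complex_cnj_mult mult.commute)
  also have "\<dots> = cinner (C *v y) z"
    by (simp add: cinner_def matrix_vector_mult_def sum_distrib_right cnj_sum)
  finally show ?thesis .
qed

lemma hermitian_matI_adjoint:
  assumes "\<And>y z. cinner y (C *v z) = cinner (C *v y) z"
  shows "hermitian_mat C"
  unfolding hermitian_mat_def
proof (intro allI)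
  fix i j
  have cinner_axis: "cinner (axis k 1) z = z$k" for k and z :: "complex^'n"
  proof -
    have "cinner (axis k 1) z = (\<Sum>l\<in>UNIV. if l = k then z$l else 0)"
      unfolding cinner_def by (rule sum.cong) (auto simp: axis_def)
    then show ?thesis by simp
  qed
  have column: "(C *v axis l 1) $ k = C$k$l" for k l
  proof -
    have "(C *v axis l 1) $ k = (\<Sum>m\<in>UNIV. if m = l then C$k$m else 0)"
      unfolding matrix_vector_mult_def vec_lambda_beta by (rule sum.cong) (auto simp: axis_def)
    then show ?thesis by simp
  qed
  have entry: "cinner (axis i 1) (C *v axis j 1) = C$i$j"
    by (simp add: cinner_axis column)
  have "cinner (C *v axis i 1) (axis j 1) = cnj (C$j$i)"
    by (subst cinner_commute) (simp add: cinner_axis column)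
  then show "C$i$j = cnj (C$j$i)"
    using assms entry by metis
qed

lemma cinner_hermitian_real:
  assumes "hermitian_mat C"
  shows "cinner x (C *v x) = of_real (sqnorm_mat C x)"
proof -
  have "cinner x (C *v x) = cnj (cinner x (C *v x))"
    using hermitian_mat_adjoint[OF assms, of x x] cinner_commute[of "C *v x" x] by simp
  then show ?thesis
    unfolding sqnorm_mat_def by (metis Reals_cnj_iff complex_is_Real_iff of_real_Re)
qed

lemma shift_mat_mult_vector: "shift_mat A M lam *v y = A *v y - lam *s (M *v y)"
  by (simp add: shift_mat_def matrix_vector_mult_def vec_eq_iff sum_subtractf
      sum_distrib_left left_diff_distrib mult.assoc)

lemma hermitian_shift_mat:
  assumes "hermitian_mat A" and "hermitian_mat M"
  shows "hermitian_mat (shift_mat A M (of_real lam))"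
  unfolding hermitian_mat_def
proof (intro allI)
  fix i j
  have "A$i$j = cnj (A$j$i)" and "M$i$j = cnj (M$j$i)"
    using assms unfolding hermitian_mat_def by blast+
  then show "shift_mat A M (of_real lam) $i$j = cnj (shift_mat A M (of_real lam) $j$i)"
    by (simp add: shift_mat_def)
qed

lemma sqnorm_shift_mat:
  "sqnorm_mat (shift_mat A M (of_real lam)) y = sqnorm_mat A y - lam * sqnorm_mat M y"
  by (simp add: sqnorm_mat_def shift_mat_mult_vector cinner_diff_right cinner_scale_right)

lemma sqnorm_mat_scale: "sqnorm_mat C (c *s z) = (cmod c)^2 * sqnorm_mat C z"
proof -
  have "c * cnj c = of_real ((cmod c)^2)"
    using complex_norm_square[of c] by simp
  then have "sqnorm_mat C (c *s z) = Re (of_real ((cmod c)^2) * cinner z (C *v z))"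
    by (simp only: sqnorm_mat_def vector_scalar_commute cinner_scale_left cinner_scale_right
        mult.assoc[symmetric])
  then show ?thesis
    by (simp add: sqnorm_mat_def)
qed

lemma sqnorm_mat_pos: "posdef_mat B \<Longrightarrow> z \<noteq> 0 \<Longrightarrow> 0 < sqnorm_mat B z"
  by (simp add: posdef_mat_def sqnorm_mat_def)

lemma sqnorm_mat_nonneg: "posdef_mat B \<Longrightarrow> 0 \<le> sqnorm_mat B z"
  using sqnorm_mat_pos[of B z] by (cases "z = 0") (auto simp: sqnorm_mat_def)

lemma cinner_form_add_scale:
  "cinner (x + c *s u) (C *v (x + c *s u)) =
     cinner x (C *v x) + c * cinner x (C *v u) + cnj c * cinner u (C *v x) + cnj c * c * cinner u (C *v u)"
  by (simp add: matrix_vector_right_distrib vector_scalar_commute cinner_add_left cinner_add_right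
      cinner_scale_left cinner_scale_right algebra_simps)

lemma sqnorm_mat_add_scale_real:
  assumes "hermitian_mat C"
  shows "sqnorm_mat C (x + of_real t *s u) =
     sqnorm_mat C x + 2 * t * Re (cinner u (C *v x)) + t^2 * sqnorm_mat C u"
proof -
  have "Re (cinner x (C *v u)) = Re (cinner u (C *v x))"
    using hermitian_mat_adjoint[OF assms, of x u] cinner_commute[of "C *v x" u] by simp
  then show ?thesis
    unfolding sqnorm_mat_def cinner_form_add_scale by (simp add: power2_eq_square)
qed

lemma matrix_inv_invertible:
  assumes "invertible T"
  shows "T ** matrix_inv T = mat 1" and "matrix_inv T ** T = mat 1"
  using someI_ex[OF assms[unfolded invertible_def]] by (simp_all add: matrix_inv_def)

lemma posdef_invertible:
  assumes "posdef_mat T"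
  shows "invertible T"
proof -
  have "inj ((*v) T)"
  proof (rule injI)
    fix x y
    assume "T *v x = T *v y"
    then have "sqnorm_mat T (x - y) = 0"
      by (simp add: sqnorm_mat_def matrix_vector_mult_diff_distrib)
    then show "x = y"
      using sqnorm_mat_pos[OF assms, of "x - y"] by auto
  qed
  then show ?thesis
    by (simp add: invertible_left_inverse matrix_left_invertible_injective)
qed

lemma posdef_matrix_inv:
  assumes pdT: "posdef_mat T"
  shows "posdef_mat (matrix_inv T)"
proof -
  define Ti where "Ti = matrix_inv T"
  have hT: "hermitian_mat T"
    using pdT by (simp add: posdef_mat_def)
  have TTi: "T *v (Ti *v v) = v" for v
    using matrix_inv_invertible(1)[OF posdef_invertible[OF pdT]]
    by (simp add: Ti_def matrix_vector_mul_assoc)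
  have form: "cinner x (Ti *v y) = cinner (Ti *v x) (T *v (Ti *v y))" for x y
    using hermitian_mat_adjoint[OF hT, of "Ti *v x" "Ti *v y"] by (simp add: TTi)
  have "hermitian_mat Ti"
    by (rule hermitian_matI_adjoint) (simp add: form TTi)
  moreover have "0 < Re (cinner x (Ti *v x))" if "x \<noteq> 0" for x
  proof -
    have "Ti *v x \<noteq> 0"
      using that TTi[of x] by auto
    moreover have "cinner x (Ti *v x) = cinner (Ti *v x) (T *v (Ti *v x))"
      by (rule form)
    ultimately show ?thesis
      using sqnorm_mat_pos[OF pdT] by (simp add: sqnorm_mat_def)
  qed
  ultimately show ?thesis
    by (simp add: posdef_mat_def Ti_def)
qed

lemma linear_coeff_zero_if_quadratic_nonneg:
  fixes a b :: real
  assumes nonneg: "\<And>t. 0 \<le> a * t + b * t^2"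
  shows "a = 0"
proof (rule ccontr)
  assume "a \<noteq> 0"
  define k where "k = \<bar>b\<bar> + 1"
  have k: "0 < k" "b - k < 0"
    by (simp_all add: k_def)
  have "a * (- a / k) + b * (- a / k)^2 = a^2 * (b - k) / k^2"
    using k by (simp add: field_simps power2_eq_square)
  also have "\<dots> < 0"
    using k \<open>a \<noteq> 0\<close> by (simp add: divide_neg_pos mult_pos_neg)
  finally show False
    using nonneg[of "- a / k"] by linarith
qed

lemma hermitian_psd_null_vector:
  assumes herm: "hermitian_mat C" and psd: "\<And>z. 0 \<le> sqnorm_mat C z"
    and null: "sqnorm_mat C x = 0"
  shows "C *v x = 0"
proof -
  define u where "u = C *v x"
  have "0 \<le> 2 * Re (cinner u u) * t + sqnorm_mat C u * t^2" for t
    using psd[of "x + of_real t *s u"]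
    by (simp add: sqnorm_mat_add_scale_real[OF herm] null u_def mult_ac)
  then have "2 * Re (cinner u u) = 0"
    by (rule linear_coeff_zero_if_quadratic_nonneg)
  then show ?thesis
    by (simp add: Re_cinner_self_eq_0_iff u_def)
qed

lemma continuous_on_sqnorm_mat: "continuous_on S (sqnorm_mat C)"
  unfolding sqnorm_mat_def cinner_def matrix_vector_mult_def
  by (intro continuous_intros)

lemma rayleigh_quotient_attains_min:
  assumes pdB: "posdef_mat B"
  obtains x where "x \<noteq> 0"
    and "\<And>z. sqnorm_mat M x / sqnorm_mat B x * sqnorm_mat B z \<le> sqnorm_mat M z"
proof -
  define q where "q z = sqnorm_mat M z / sqnorm_mat B z" for z
  have "sqnorm_mat B z \<noteq> 0" if "z \<in> sphere 0 1" for z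
    using that sqnorm_mat_pos[OF pdB, of z] by fastforce
  then have "continuous_on (sphere 0 1) q"
    unfolding q_def by (intro continuous_on_divide continuous_on_sqnorm_mat) auto
  then obtain x where x: "x \<in> sphere 0 1" and xmin: "\<And>y. y \<in> sphere 0 1 \<Longrightarrow> q x \<le> q y"
    using continuous_attains_inf[of "sphere 0 1" q] by auto
  have "q x * sqnorm_mat B z \<le> sqnorm_mat M z" for z
  proof (cases "z = 0")
    case True
    then show ?thesis
      by (simp add: sqnorm_mat_def)
  next
    case False
    define c where "c = complex_of_real (1 / norm z)"
    have "c *s z = (1 / norm z) *\<^sub>R z"
      unfolding c_def scaleR_vec_def vector_scalar_mult_def by (simp add: scaleR_conv_of_real)
    then have "c *s z \<in> sphere 0 1"
      using False by simp
    moreover have "q (c *s z) = q z"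
      using False by (simp add: q_def sqnorm_mat_scale c_def)
    ultimately have "q x \<le> q z"
      using xmin by metis
    then show ?thesis
      using sqnorm_mat_pos[OF pdB False] by (simp add: q_def pos_le_divide_eq)
  qed
  moreover have "x \<noteq> 0"
    using x by auto
  ultimately show thesis
    using that by (simp add: q_def)
qed

lemma pair_eigval_rayleigh_min:
  assumes hM: "hermitian_mat M" and pdB: "posdef_mat B"
  obtains m where "pair_eigval M B (of_real m)" and "\<And>z. m * sqnorm_mat B z \<le> sqnorm_mat M z"
proof -
  obtain x where "x \<noteq> 0"
    and min: "\<And>z. sqnorm_mat M x / sqnorm_mat B x * sqnorm_mat B z \<le> sqnorm_mat M z"
    using rayleigh_quotient_attains_min[OF pdB] by blast
  define m where "m = sqnorm_mat M x / sqnorm_mat B x"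
  define C where "C = shift_mat M B (of_real m)"
  have hB: "hermitian_mat B"
    using pdB by (simp add: posdef_mat_def)
  have "C *v x = 0"
  proof (rule hermitian_psd_null_vector)
    show "hermitian_mat C"
      unfolding C_def using hM hB by (rule hermitian_shift_mat)
    show "0 \<le> sqnorm_mat C z" for z
      using min[of z, folded m_def] unfolding C_def sqnorm_shift_mat by simp
    show "sqnorm_mat C x = 0"
      using sqnorm_mat_pos[OF pdB \<open>x \<noteq> 0\<close>] unfolding C_def sqnorm_shift_mat by (simp add: m_def)
  qed
  then have "pair_eigval M B (of_real m)"
    using \<open>x \<noteq> 0\<close> by (auto simp: pair_eigval_def C_def shift_mat_mult_vector)
  then show thesis
    using min[folded m_def] by (rule that)
qed

lemma rayleigh_ge_pair_eigval_lower_bound: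
  assumes "hermitian_mat M" and pdB: "posdef_mat B"
    and lower: "\<forall>mu. pair_eigval M B mu \<longrightarrow> mu1 \<le> Re mu"
  shows "mu1 * sqnorm_mat B z \<le> sqnorm_mat M z"
proof -
  obtain m where "pair_eigval M B (of_real m)" and "m * sqnorm_mat B z \<le> sqnorm_mat M z"
    using pair_eigval_rayleigh_min[OF assms(1,2)] by metis
  moreover have "mu1 * sqnorm_mat B z \<le> m * sqnorm_mat B z"
    using calculation(1) lower sqnorm_mat_nonneg[OF pdB] by (force intro: mult_right_mono)
  ultimately show ?thesis
    by linarith
qed

lemma cmod_cinner_le_norm_mat:
  assumes pdB: "posdef_mat B"
  shows "cmod (cinner v (B *v x)) \<le> norm_mat B v * norm_mat B x"
proof (cases "v = 0")
  case True
  then show ?thesis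
    by (simp add: norm_mat_def sqnorm_mat_def)
next
  case False
  have hB: "hermitian_mat B"
    using pdB by (simp add: posdef_mat_def)
  define a where "a = cinner v (B *v x)"
  define b where "b = sqnorm_mat B v"
  define c where "c = - (a / of_real b)"
  have b: "0 < b"
    using sqnorm_mat_pos[OF pdB False] by (simp add: b_def)
  have "cinner x (B *v v) = cnj a"
    unfolding a_def by (subst cinner_commute) (simp add: hermitian_mat_adjoint[OF hB])
  then have "cinner (x + c *s v) (B *v (x + c *s v)) =
      cinner x (B *v x) + (c * cnj a + cnj c * a + cnj c * c * of_real b)"
    unfolding cinner_form_add_scale cinner_hermitian_real[OF hB, of v] a_def b_def
    by (simp add: add.assoc)
  \<comment> \<open>\<open>c\<close> minimises the form along \<open>v\<close>.\<close>
  also have "c * cnj a + cnj c * a + cnj c * c * of_real b = - of_real ((cmod a)^2 / b)"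
    using b complex_norm_square[of a] unfolding c_def
    by (simp add: field_simps power2_eq_square)
  finally have "sqnorm_mat B (x + c *s v) = sqnorm_mat B x - (cmod a)^2 / b"
    by (simp add: sqnorm_mat_def)
  moreover have "0 \<le> sqnorm_mat B (x + c *s v)"
    using pdB by (rule sqnorm_mat_nonneg)
  ultimately have "(cmod a)^2 / b \<le> sqnorm_mat B x"
    by linarith
  then have "(cmod a)^2 \<le> b * sqnorm_mat B x"
    using b by (simp add: pos_divide_le_eq mult.commute)
  then have "cmod a \<le> sqrt (b * sqnorm_mat B x)"
    by (rule real_le_rsqrt)
  then show ?thesis
    by (simp add: a_def b_def norm_mat_def real_sqrt_mult)
qed

lemma cos_angle_sq_mult_sqnorm_le:
  assumes pdB: "posdef_mat B" and "y0 \<in> X" and "y0 \<noteq> 0"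
    and same: "\<And>y. y \<in> X \<Longrightarrow> cinner y (B *v x) = cinner y (B *v z)"
  shows "(cos_angle B x X)^2 * sqnorm_mat B x \<le> sqnorm_mat B z"
proof (cases "x = 0")
  case True
  then show ?thesis
    using sqnorm_mat_nonneg[OF pdB] by (simp add: sqnorm_mat_def)
next
  case False
  define S where "S = {cmod (cinner y (B *v x)) / (norm_mat B y * norm_mat B x) | y. y \<in> X \<and> y \<noteq> 0}"
  have nx: "0 < norm_mat B x"
    using sqnorm_mat_pos[OF pdB False] by (simp add: norm_mat_def)
  have S_bounds: "0 \<le> s \<and> s \<le> norm_mat B z / norm_mat B x" if "s \<in> S" for s
  proof -
    obtain y where "y \<in> X" "y \<noteq> 0" and s: "s = cmod (cinner y (B *v z)) / (norm_mat B y * norm_mat B x)"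
      using \<open>s \<in> S\<close> same unfolding S_def by auto
    have ny: "0 < norm_mat B y"
      using sqnorm_mat_pos[OF pdB \<open>y \<noteq> 0\<close>] by (simp add: norm_mat_def)
    have "cmod (cinner y (B *v z)) / norm_mat B y \<le> norm_mat B z"
      using cmod_cinner_le_norm_mat[OF pdB, of y z] ny by (simp add: divide_le_eq mult.commute)
    then have "cmod (cinner y (B *v z)) / norm_mat B y / norm_mat B x \<le> norm_mat B z / norm_mat B x"
      using nx by (rule divide_right_mono[OF _ less_imp_le])
    then show ?thesis
      using ny nx by (simp add: s)
  qed
  have "S \<noteq> {}"
    using \<open>y0 \<in> X\<close> \<open>y0 \<noteq> 0\<close> unfolding S_def by blast
  then obtain s0 where "s0 \<in> S"
    by blast
  have "bdd_above S"
    using S_bounds by (intro bdd_aboveI[of S "norm_mat B z / norm_mat B x"]) blast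
  then have "0 \<le> Sup S"
    using S_bounds[OF \<open>s0 \<in> S\<close>] cSup_upper[OF \<open>s0 \<in> S\<close>] by linarith
  moreover have "Sup S * norm_mat B x \<le> norm_mat B z"
    using cSup_least[OF \<open>S \<noteq> {}\<close>, of "norm_mat B z / norm_mat B x"] S_bounds nx
    by (simp add: pos_le_divide_eq)
  ultimately have "(Sup S * norm_mat B x)^2 \<le> (norm_mat B z)^2"
    using nx by (intro power_mono) simp_all
  then show ?thesis
    using sqnorm_mat_nonneg[OF pdB]
    unfolding cos_angle_def S_def[symmetric] by (simp add: norm_mat_def power_mult_distrib)
qed

lemma pcg_kernel_orthogonal:
  assumes hAl: "hermitian_mat Al" and TiT: "Ti ** T = mat 1" and y: "Al *v y = 0"
  shows "cinner y (pcg_r Al T x0 k) = 0 \<and> cinner y (Ti *v pcg_p Al T x0 k) = 0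
     \<and> cinner y (Ti *v (pcg_x Al T x0 k - x0)) = 0"
proof -
  have TiTv: "Ti *v (T *v v) = v" for v
    using TiT by (simp add: matrix_vector_mul_assoc)
  have Aly: "cinner y (Al *v v) = 0" for v
    using hermitian_mat_adjoint[OF hAl, of y v] y by simp
  show ?thesis
  proof (induction k)
    case 0
    show ?case
      by (simp add: pcg_r_def pcg_p_def pcg_x_def pcg_init_def Let_def TiTv cinner_minus_right Aly)
  next
    case (Suc k)
    obtain x r g p where st: "pcg Al T x0 k = (x, r, g, p)"
      by (cases "pcg Al T x0 k") auto
    have ih: "cinner y r = 0" "cinner y (Ti *v p) = 0" "cinner y (Ti *v (x - x0)) = 0"
      using Suc.IH by (simp_all add: pcg_r_def pcg_p_def pcg_x_def st)
    define d where "d = g / cinner (Al *v p) p"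
    define r' where "r' = r - d *s (Al *v p)"
    define g' where "g' = cinner (T *v r') r'"
    have step: "pcg Al T x0 (Suc k) = (x + d *s p, r', g', T *v r' + (g' / g) *s p)"
      by (simp add: st pcg_step_def Let_def d_def r'_def g'_def)
    have r': "cinner y r' = 0"
      by (simp add: r'_def cinner_diff_right cinner_scale_right ih Aly)
    have x': "cinner y (Ti *v (x + d *s p - x0)) = 0"
      unfolding diff_add_eq[symmetric]
      by (simp add: matrix_vector_right_distrib vector_scalar_commute cinner_add_right
          cinner_scale_right ih)
    have p': "cinner y (Ti *v (T *v r' + (g' / g) *s p)) = 0"
      by (simp add: matrix_vector_right_distrib vector_scalar_commute cinner_add_right
          cinner_scale_right ih TiTv r')
    show ?case
      using r' x' p' unfolding pcg_r_def pcg_p_def pcg_x_def step by simp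
  qed
qed

lemma pcg_increment_orthogonal_eigspace:
  assumes "hermitian_mat A" and "hermitian_mat M" and "posdef_mat T"
    and "y \<in> pair_eigspace A M (of_real lam)"
  shows "cinner y (matrix_inv T *v (pcg_x (shift_mat A M (of_real lam)) T x0 i - x0)) = 0"
proof -
  have "shift_mat A M (of_real lam) *v y = 0"
    using assms(4) by (simp add: pair_eigspace_def shift_mat_mult_vector)
  then show ?thesis
    using pcg_kernel_orthogonal[OF hermitian_shift_mat[OF assms(1,2)]
        matrix_inv_invertible(2)[OF posdef_invertible[OF assms(3)]]]
    by blast
qed

theorem lemma2p3:
  fixes A M T :: "complex^'n^'n" and lam1 mu1 :: real and x0 :: "complex^'n" and i :: nat
  assumes n2: "CARD('n) \<ge> 2"
    and hA: "hermitian_mat A" and pdM: "posdef_mat M" and pdT: "posdef_mat T"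
    and lam1_eig: "pair_eigval A M (complex_of_real lam1)"
    and lam1_min: "\<forall>mu. pair_eigval A M mu \<longrightarrow> lam1 \<le> Re mu"
    and lam1_simple: "\<exists>v. v \<noteq> 0 \<and> pair_eigspace A M (complex_of_real lam1) = {c *s v | c. True}"
    and x0_not_eig: "x0 \<notin> pair_eigspace A M (complex_of_real lam1)"
    and x0_not_Morth: "\<exists>y\<in>pair_eigspace A M (complex_of_real lam1). cinner y (M *v x0) \<noteq> 0"
    and mu1_eig: "pair_eigval M (matrix_inv T) (complex_of_real mu1)"
    and mu1_min: "\<forall>mu. pair_eigval M (matrix_inv T) mu \<longrightarrow> mu1 \<le> Re mu"
    and def_i: "pcg_defined (shift_mat A M (complex_of_real lam1)) T x0 i"
  shows "(\<forall>y\<in>pair_eigspace A M (complex_of_real lam1).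
            cinner y (matrix_inv T *v (pcg_x (shift_mat A M (complex_of_real lam1)) T x0 i - x0)) = 0)
       \<and> sqnorm_mat M (pcg_x (shift_mat A M (complex_of_real lam1)) T x0 i)
           \<ge> mu1 * sqnorm_mat (matrix_inv T) x0
               * (cos_angle (matrix_inv T) x0 (pair_eigspace A M (complex_of_real lam1)))^2"
proof -
  define Al where "Al = shift_mat A M (complex_of_real lam1)"
  define Ti where "Ti = matrix_inv T"
  define X where "X = pair_eigspace A M (complex_of_real lam1)"
  define xi where "xi = pcg_x Al T x0 i"
  have hM: "hermitian_mat M"
    using pdM by (simp add: posdef_mat_def)
  have pdTi: "posdef_mat Ti"
    using posdef_matrix_inv[OF pdT] by (simp add: Ti_def)
  have orth: "\<forall>y\<in>X. cinner y (Ti *v (xi - x0)) = 0"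
    using pcg_increment_orthogonal_eigspace[OF hA hM pdT] by (simp add: Al_def Ti_def X_def xi_def)
  obtain v where "v \<noteq> 0" and Xv: "X = {c *s v | c. True}"
    using lam1_simple by (auto simp: X_def)
  have "v \<in> X"
    unfolding Xv by (rule CollectI, rule exI[of _ 1]) simp
  have cos: "(cos_angle Ti x0 X)^2 * sqnorm_mat Ti x0 \<le> sqnorm_mat Ti xi"
    using orth
    by (intro cos_angle_sq_mult_sqnorm_le[OF pdTi \<open>v \<in> X\<close> \<open>v \<noteq> 0\<close>])
      (simp add: matrix_vector_mult_diff_distrib cinner_diff_right)
  have rayleigh: "mu1 * sqnorm_mat Ti xi \<le> sqnorm_mat M xi"
    using rayleigh_ge_pair_eigval_lower_bound[OF hM pdTi] mu1_min by (simp add: Ti_def)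
  have "mu1 * sqnorm_mat Ti x0 * (cos_angle Ti x0 X)^2 \<le> sqnorm_mat M xi"
  proof (cases "0 \<le> mu1")
    case True
    with cos have "mu1 * ((cos_angle Ti x0 X)^2 * sqnorm_mat Ti x0) \<le> mu1 * sqnorm_mat Ti xi"
      by (rule mult_left_mono)
    with rayleigh show ?thesis
      by (simp add: mult_ac)
  next
    case False
    then have "mu1 * sqnorm_mat Ti x0 * (cos_angle Ti x0 X)^2 \<le> 0"
      using sqnorm_mat_nonneg[OF pdTi, of x0] by (simp add: mult_nonpos_nonneg)
    also have "0 \<le> sqnorm_mat M xi"
      using pdM by (rule sqnorm_mat_nonneg)
    finally show ?thesis .
  qed
  with orth show ?thesis
    by (simp add: Al_def Ti_def X_def xi_def)
qed

end
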